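(* There exist universal constants $c>0,\Delta>0$ (not depending on $A,\sigma,m_1,m_2,x$) such that the following holds. Let $A\ge0$, $\sigma>0$, $m_1,m_2:\mathcal{X}\to\mathbb{R}$, and fix $x\in\mathcal{X}$ with $|m_1(x)-m_2(x)|/\sqrt{\sigma^2+A}\le\Delta$. Then for every $t:\mathcal{X}\times\mathbb{R}\to\mathbb{R}$, $$\frac12\big[L(t;m_1,A\mid x)+L(t;m_2,A\mid x)\big]\ \ge\ c\,\frac{\sigma^4}{(\sigma^2+A)^2}\big(m_1(x)-m_2(x)\big)^2.$$
   Context: Model: $X\sim\mathbb{P}^X$, $\mu\mid X\sim N(m(X),A)$, $Z\mid\mu\sim N(\mu,\sigma^2)$. Bayes rule $t^*_{m,A}(x,z)=\frac{A}{\sigma^2+A}z+\frac{\sigma^2}{\sigma^2+A}m(x)$. Pointwise excess risk: $L(t;m,A\mid x)=\mathbb{E}_{m,A}\big[(t(x,Z)-\mu)^2-(t^*_{m,A}(x,Z)-\mu)^2\mid X=x\big]$. *)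

theory Defs
  imports "HOL-Probability.Probability"
begin

definition tstar :: "('x \<Rightarrow> real) \<Rightarrow> real \<Rightarrow> real \<Rightarrow> 'x \<times> real \<Rightarrow> real" where
  "tstar m A \<sigma> xz = A / (\<sigma>\<^sup>2 + A) * snd xz + \<sigma>\<^sup>2 / (\<sigma>\<^sup>2 + A) * m (fst xz)"

text \<open>Conditional risk E[(f(Z) - mu)^2 | X = x] where, given X = x with m(x) = mx,
  mu ~ N(mx, A) and Z | mu ~ N(mu, sigma^2).  Realised via independent standard normals
  U, V: mu = mx + sqrt A * U, Z = mu + sigma * V (this also covers A = 0, where mu is
  the point mass at mx).\<close>
definition cond_risk :: "(real \<Rightarrow> real) \<Rightarrow> real \<Rightarrow> real \<Rightarrow> real \<Rightarrow> ennreal" where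
  "cond_risk f mx A \<sigma> =
     (\<integral>\<^sup>+ w. ennreal (std_normal_density (fst w) * std_normal_density (snd w) *
        (f (mx + sqrt A * fst w + \<sigma> * snd w) - (mx + sqrt A * fst w))\<^sup>2)
      \<partial>(lborel \<Otimes>\<^sub>M lborel))"

text \<open>Pointwise excess risk L(t; m, A | x) (extended real; the Bayes risk is finite).\<close>
definition excess_risk :: "('x \<times> real \<Rightarrow> real) \<Rightarrow> ('x \<Rightarrow> real) \<Rightarrow> real \<Rightarrow> real \<Rightarrow> 'x \<Rightarrow> ereal" where
  "excess_risk t m A \<sigma> x =
     enn2ereal (cond_risk (\<lambda>z. t (x, z)) (m x) A \<sigma>)
     - enn2ereal (cond_risk (\<lambda>z. tstar m A \<sigma> (x, z)) (m x) A \<sigma>)"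

end

theory Submission
  imports Defs
begin

(* Write mu = m(x) + sqrt A * U and Z = mu + sigma * V with U, V independent standard normals.
   Completing the square factors the joint density of (U, Z) into the N(m(x), sigma^2 + A)
   density of Z times a Gaussian density of U, so integrating out U shows that the excess risk
   of t is the N(m(x), sigma^2 + A)-weighted L2 distance between t(x, .) and the Bayes rule.
   The Bayes rules for m1 and m2 differ by the constant d = sigma^2/(sigma^2 + A) (m1 x - m2 x),
   so at every z the two squared errors add up to at least d^2/2. If |m1 x - m2 x| is at most
   s = sqrt (sigma^2 + A), both normal densities are at least exp(-9/8)/(sqrt(2 pi) s) on an
   interval of length 2 s around (m1 x + m2 x)/2; hence c = exp(-9/8)/(2 sqrt(2 pi)), Delta = 1. *)

lemma completing_square:
  fixes \<sigma> r u y :: real assumes "\<sigma> > 0"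
  defines "S \<equiv> \<sigma>\<^sup>2 + r\<^sup>2"
  shows "u\<^sup>2 + ((y - r * u) / \<sigma>)\<^sup>2 = y\<^sup>2 / S + (u - r * y / S)\<^sup>2 / (\<sigma>\<^sup>2 / S)"
proof -
  have "S > 0" unfolding S_def using assms(1) by (simp add: add_pos_nonneg)
  with assms(1) show ?thesis
    by (simp add: field_simps power2_eq_square) (simp add: S_def algebra_simps power2_eq_square)
qed

lemma normal_density_eq_std_normal_density:
  "\<tau> > 0 \<Longrightarrow> normal_density \<mu> \<tau> x = std_normal_density ((x - \<mu>) / \<tau>) / \<tau>"
  by (simp add: normal_density_def real_sqrt_mult power_divide)

lemma std_normal_density_mult:
  "std_normal_density a * std_normal_density b = exp (- (a\<^sup>2 + b\<^sup>2) / 2) / (2 * pi)"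
  by (simp add: std_normal_density_def exp_add[symmetric] add_divide_distrib)

lemma std_normal_density_joint_factorization:
  fixes \<sigma> A mx u z :: real assumes "\<sigma> > 0" and "A \<ge> 0"
  defines "s \<equiv> sqrt (\<sigma>\<^sup>2 + A)"
  shows "std_normal_density u * std_normal_density ((z - mx - sqrt A * u) / \<sigma>) / \<sigma>
     = normal_density mx s z * normal_density (sqrt A * (z - mx) / s\<^sup>2) (\<sigma> / s) u"
proof -
  have s2: "s\<^sup>2 = \<sigma>\<^sup>2 + (sqrt A)\<^sup>2" unfolding s_def using assms by simp
  have "s > 0" unfolding s_def using assms by (simp add: add_pos_nonneg)
  have exponent: "u\<^sup>2 + ((z - mx - sqrt A * u) / \<sigma>)\<^sup>2
      = ((z - mx) / s)\<^sup>2 + ((u - sqrt A * (z - mx) / s\<^sup>2) / (\<sigma> / s))\<^sup>2"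
    using completing_square[OF assms(1), of u "z - mx" "sqrt A"] unfolding s2[symmetric]
    by (simp only: power_divide)
  have "normal_density mx s z * normal_density (sqrt A * (z - mx) / s\<^sup>2) (\<sigma> / s) u
      = std_normal_density ((z - mx) / s) * std_normal_density ((u - sqrt A * (z - mx) / s\<^sup>2) / (\<sigma> / s))
        / \<sigma>"
    using \<open>s > 0\<close> assms(1)
    by (simp only: normal_density_eq_std_normal_density[OF \<open>s > 0\<close>]
        normal_density_eq_std_normal_density[OF divide_pos_pos[OF assms(1) \<open>s > 0\<close>]]) simp
  also have "\<dots> = std_normal_density u * std_normal_density ((z - mx - sqrt A * u) / \<sigma>) / \<sigma>"
    by (simp only: std_normal_density_mult exponent)
  finally show ?thesis ..
qed

lemma nn_integral_normal_density_mult_square: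
  fixes \<mu> \<tau> c a :: real assumes "\<tau> > 0"
  shows "(\<integral>\<^sup>+u. ennreal (normal_density \<mu> \<tau> u * (c - a * u)\<^sup>2) \<partial>lborel)
    = ennreal ((c - a * \<mu>)\<^sup>2 + a\<^sup>2 * \<tau>\<^sup>2)"
proof -
  let ?b = "c - a * \<mu>"
  have "has_bochner_integral lborel (\<lambda>u. ?b\<^sup>2 * (normal_density \<mu> \<tau> u * (u - \<mu>) ^ (2 * 0))
      + (- 2 * ?b * a) * (normal_density \<mu> \<tau> u * (u - \<mu>) ^ (2 * 0 + 1))
      + a\<^sup>2 * (normal_density \<mu> \<tau> u * (u - \<mu>) ^ (2 * 1)))
    (?b\<^sup>2 * 1 + (- 2 * ?b * a) * 0 + a\<^sup>2 * \<tau>\<^sup>2)"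
    using normal_moment_even[OF assms, of \<mu> 0] normal_moment_odd[OF assms, of \<mu> 0]
      normal_moment_even[OF assms, of \<mu> 1]
    by (intro has_bochner_integral_add has_bochner_integral_mult_right) simp_all
  then have "has_bochner_integral lborel (\<lambda>u. normal_density \<mu> \<tau> u * (c - a * u)\<^sup>2)
      (?b\<^sup>2 + a\<^sup>2 * \<tau>\<^sup>2)"
    by (rule has_bochner_integral_cong[THEN iffD1, rotated -1])
      (auto simp: power2_eq_square algebra_simps)
  then show ?thesis
    by (simp add: nn_integral_eq_integral integrable.intros has_bochner_integral_integral_eq)
qed

lemma cond_risk_eq_iterated:
  fixes f :: "real \<Rightarrow> real"
  assumes [measurable]: "f \<in> borel_measurable borel" and "\<sigma> > 0"
  shows "cond_risk f mx A \<sigma> = (\<integral>\<^sup>+z. \<integral>\<^sup>+u.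
    ennreal (std_normal_density u * std_normal_density ((z - mx - sqrt A * u) / \<sigma>) / \<sigma>
      * (f z - (mx + sqrt A * u))\<^sup>2) \<partial>lborel \<partial>lborel)"
proof -
  define G where "G u z = ennreal (std_normal_density u * std_normal_density ((z - mx - sqrt A * u) / \<sigma>)
      / \<sigma> * (f z - (mx + sqrt A * u))\<^sup>2)" for u z
  have [measurable]: "(\<lambda>(u, z). G u z) \<in> borel_measurable (lborel \<Otimes>\<^sub>M lborel)"
    unfolding G_def by measurable
  have substitute: "(\<integral>\<^sup>+v. ennreal (std_normal_density u * std_normal_density v *
      (f (mx + sqrt A * u + \<sigma> * v) - (mx + sqrt A * u))\<^sup>2) \<partial>lborel) = (\<integral>\<^sup>+z. G u z \<partial>lborel)" for u
  proof -
    have "(\<integral>\<^sup>+z. G u z \<partial>lborel) = ennreal \<sigma> * (\<integral>\<^sup>+v. G u (mx + sqrt A * u + \<sigma> * v) \<partial>lborel)"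
      using nn_integral_real_affine[of "G u" \<sigma> "mx + sqrt A * u"] \<open>\<sigma> > 0\<close> by (simp add: G_def)
    also have "\<dots> = (\<integral>\<^sup>+v. ennreal (std_normal_density u * std_normal_density v *
        (f (mx + sqrt A * u + \<sigma> * v) - (mx + sqrt A * u))\<^sup>2) \<partial>lborel)"
      using \<open>\<sigma> > 0\<close> by (subst nn_integral_cmult[symmetric])
        (auto intro!: nn_integral_cong simp: G_def ennreal_mult[symmetric])
    finally show ?thesis ..
  qed
  have "cond_risk f mx A \<sigma> = (\<integral>\<^sup>+u. \<integral>\<^sup>+v. ennreal (std_normal_density u * std_normal_density v *
      (f (mx + sqrt A * u + \<sigma> * v) - (mx + sqrt A * u))\<^sup>2) \<partial>lborel \<partial>lborel)"
    unfolding cond_risk_def by (subst lborel.nn_integral_fst[symmetric]) (auto simp: case_prod_beta)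
  also have "\<dots> = (\<integral>\<^sup>+u. \<integral>\<^sup>+z. G u z \<partial>lborel \<partial>lborel)"
    by (simp only: substitute)
  also have "\<dots> = (\<integral>\<^sup>+z. \<integral>\<^sup>+u. G u z \<partial>lborel \<partial>lborel)"
    using lborel_pair.Fubini[of "\<lambda>(u, z). G u z"] by simp
  finally show ?thesis unfolding G_def .
qed

lemma nn_integral_joint_density_mult_square:
  fixes \<sigma> A mx y z :: real assumes "\<sigma> > 0" and "A \<ge> 0"
  defines "s \<equiv> sqrt (\<sigma>\<^sup>2 + A)"
  shows "(\<integral>\<^sup>+u. ennreal (std_normal_density u * std_normal_density ((z - mx - sqrt A * u) / \<sigma>) / \<sigma>
      * (y - (mx + sqrt A * u))\<^sup>2) \<partial>lborel)
    = ennreal (normal_density mx s z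
      * ((y - (A / (\<sigma>\<^sup>2 + A) * z + \<sigma>\<^sup>2 / (\<sigma>\<^sup>2 + A) * mx))\<^sup>2 + A * \<sigma>\<^sup>2 / (\<sigma>\<^sup>2 + A)))"
proof -
  have s2: "s\<^sup>2 = \<sigma>\<^sup>2 + A" unfolding s_def using assms by simp
  have "s > 0" unfolding s_def using assms by (simp add: add_pos_nonneg)
  let ?\<mu> = "sqrt A * (z - mx) / s\<^sup>2"
  have "(\<integral>\<^sup>+u. ennreal (std_normal_density u * std_normal_density ((z - mx - sqrt A * u) / \<sigma>) / \<sigma>
      * (y - (mx + sqrt A * u))\<^sup>2) \<partial>lborel)
    = (\<integral>\<^sup>+u. ennreal (normal_density mx s z)
        * ennreal (normal_density ?\<mu> (\<sigma> / s) u * ((y - mx) - sqrt A * u)\<^sup>2) \<partial>lborel)"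
    using std_normal_density_joint_factorization[OF assms(1,2)]
    by (intro nn_integral_cong) (simp add: s_def ennreal_mult[symmetric] algebra_simps)
  also have "\<dots> = ennreal (normal_density mx s z)
      * ennreal (((y - mx) - sqrt A * ?\<mu>)\<^sup>2 + (sqrt A)\<^sup>2 * (\<sigma> / s)\<^sup>2)"
    using \<open>s > 0\<close> assms(1)
    by (simp add: nn_integral_cmult nn_integral_normal_density_mult_square)
  also have "((y - mx) - sqrt A * ?\<mu>)\<^sup>2 + (sqrt A)\<^sup>2 * (\<sigma> / s)\<^sup>2
      = (y - (A / (\<sigma>\<^sup>2 + A) * z + \<sigma>\<^sup>2 / (\<sigma>\<^sup>2 + A) * mx))\<^sup>2 + A * \<sigma>\<^sup>2 / (\<sigma>\<^sup>2 + A)"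
  proof -
    have "\<sigma>\<^sup>2 + A > 0" using assms by (simp add: add_pos_nonneg)
    have "sqrt A * ?\<mu> = A * (z - mx) / (\<sigma>\<^sup>2 + A)"
      using assms(2) unfolding s2 by (simp add: mult.assoc[symmetric])
    moreover have "A / (\<sigma>\<^sup>2 + A) * z + \<sigma>\<^sup>2 / (\<sigma>\<^sup>2 + A) * mx = mx + A * (z - mx) / (\<sigma>\<^sup>2 + A)"
      using \<open>\<sigma>\<^sup>2 + A > 0\<close> by (simp add: divide_simps) (simp add: algebra_simps)
    ultimately have mean: "(y - mx) - sqrt A * ?\<mu>
        = y - (A / (\<sigma>\<^sup>2 + A) * z + \<sigma>\<^sup>2 / (\<sigma>\<^sup>2 + A) * mx)"
      by simp
    show ?thesis
      unfolding mean using assms(2) by (simp add: power_divide s2)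
  qed
  finally show ?thesis
    by (simp only: ennreal_mult'[OF normal_density_nonneg])
qed

lemma cond_risk_eq:
  fixes f :: "real \<Rightarrow> real"
  assumes [measurable]: "f \<in> borel_measurable borel" and "\<sigma> > 0" and "A \<ge> 0"
  shows "cond_risk f mx A \<sigma>
    = (\<integral>\<^sup>+z. ennreal (normal_density mx (sqrt (\<sigma>\<^sup>2 + A)) z
        * (f z - (A / (\<sigma>\<^sup>2 + A) * z + \<sigma>\<^sup>2 / (\<sigma>\<^sup>2 + A) * mx))\<^sup>2) \<partial>lborel)
      + ennreal (A * \<sigma>\<^sup>2 / (\<sigma>\<^sup>2 + A))"
proof -
  let ?s = "sqrt (\<sigma>\<^sup>2 + A)" and ?C = "A * \<sigma>\<^sup>2 / (\<sigma>\<^sup>2 + A)"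
  have "?s > 0" using assms by (simp add: add_pos_nonneg)
  have "?C \<ge> 0" using assms by simp
  have "cond_risk f mx A \<sigma>
    = (\<integral>\<^sup>+z. ennreal (normal_density mx ?s z
        * (f z - (A / (\<sigma>\<^sup>2 + A) * z + \<sigma>\<^sup>2 / (\<sigma>\<^sup>2 + A) * mx))\<^sup>2)
      + ennreal ?C * ennreal (normal_density mx ?s z) \<partial>lborel)"
    unfolding cond_risk_eq_iterated[OF assms(1,2)]
      nn_integral_joint_density_mult_square[OF assms(2,3)]
  proof (intro nn_integral_cong)
    fix z
    let ?N = "normal_density mx ?s z"
      and ?r = "(f z - (A / (\<sigma>\<^sup>2 + A) * z + \<sigma>\<^sup>2 / (\<sigma>\<^sup>2 + A) * mx))\<^sup>2"
    have "ennreal (?N * (?r + ?C)) = ennreal (?N * ?r + ?C * ?N)"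
      by (simp add: algebra_simps)
    also have "\<dots> = ennreal (?N * ?r) + ennreal ?C * ennreal ?N"
      using \<open>?C \<ge> 0\<close> by (simp only: ennreal_plus[OF mult_nonneg_nonneg mult_nonneg_nonneg]
        ennreal_mult normal_density_nonneg zero_le_power2)
    finally show "ennreal (?N * (?r + ?C)) = ennreal (?N * ?r) + ennreal ?C * ennreal ?N" .
  qed
  also have "\<dots> = (\<integral>\<^sup>+z. ennreal (normal_density mx ?s z
        * (f z - (A / (\<sigma>\<^sup>2 + A) * z + \<sigma>\<^sup>2 / (\<sigma>\<^sup>2 + A) * mx))\<^sup>2) \<partial>lborel)
      + ennreal ?C * (\<integral>\<^sup>+z. ennreal (normal_density mx ?s z) \<partial>lborel)"
    by (simp add: nn_integral_add nn_integral_cmult)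
  also have "(\<integral>\<^sup>+z. ennreal (normal_density mx ?s z) \<partial>lborel) = 1"
    using integrable_normal_density[OF \<open>?s > 0\<close>] integral_normal_density[OF \<open>?s > 0\<close>]
    by (subst nn_integral_eq_integral) auto
  finally show ?thesis by simp
qed

lemma excess_risk_eq:
  fixes t :: "'x \<times> real \<Rightarrow> real" and m :: "'x \<Rightarrow> real"
  assumes "(\<lambda>z. t (x, z)) \<in> borel_measurable borel" and "\<sigma> > 0" and "A \<ge> 0"
  shows "excess_risk t m A \<sigma> x = enn2ereal (\<integral>\<^sup>+z. ennreal (normal_density (m x) (sqrt (\<sigma>\<^sup>2 + A)) z
    * (t (x, z) - tstar m A \<sigma> (x, z))\<^sup>2) \<partial>lborel)"
proof -
  have tstar: "tstar m A \<sigma> (x, z) = A / (\<sigma>\<^sup>2 + A) * z + \<sigma>\<^sup>2 / (\<sigma>\<^sup>2 + A) * m x" for z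
    by (simp add: tstar_def)
  have "(\<lambda>z. tstar m A \<sigma> (x, z)) \<in> borel_measurable borel"
    unfolding tstar by measurable
  then have "cond_risk (\<lambda>z. tstar m A \<sigma> (x, z)) (m x) A \<sigma> = ennreal (A * \<sigma>\<^sup>2 / (\<sigma>\<^sup>2 + A))"
    using cond_risk_eq[OF _ assms(2,3)] by (simp add: tstar)
  moreover have "A * \<sigma>\<^sup>2 / (\<sigma>\<^sup>2 + A) \<ge> 0"
    using assms by simp
  ultimately show ?thesis
    unfolding excess_risk_def cond_risk_eq[OF assms] tstar[symmetric]
    by (subst add.commute) (simp add: plus_ennreal.rep_eq ereal_diff_add_inverse)
qed

lemma normal_density_lower_bound:
  fixes \<mu> \<tau> r x :: real assumes "\<tau> > 0" and "\<bar>x - \<mu>\<bar> \<le> r"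
  shows "exp (- r\<^sup>2 / (2 * \<tau>\<^sup>2)) / (sqrt (2 * pi) * \<tau>) \<le> normal_density \<mu> \<tau> x"
proof -
  have "(x - \<mu>)\<^sup>2 \<le> r\<^sup>2"
    using assms(2) by (metis abs_ge_zero power2_abs power_mono)
  then have "exp (- r\<^sup>2 / (2 * \<tau>\<^sup>2)) \<le> exp (- (x - \<mu>)\<^sup>2 / (2 * \<tau>\<^sup>2))"
    by (simp add: divide_right_mono)
  then show ?thesis
    using assms(1) by (simp add: normal_density_def real_sqrt_mult divide_right_mono)
qed

lemma two_point_gaussian_lower_bound:
  fixes h1 h2 :: "real \<Rightarrow> real"
  assumes [measurable]: "h1 \<in> borel_measurable borel" "h2 \<in> borel_measurable borel"
    and "s > 0" and "\<bar>m1 - m2\<bar> \<le> s" and "\<And>z. h1 z - h2 z = d"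
  shows "ennreal (exp (-9/8) / sqrt (2 * pi) * d\<^sup>2)
    \<le> (\<integral>\<^sup>+z. ennreal (normal_density m1 s z * (h1 z)\<^sup>2) \<partial>lborel)
      + (\<integral>\<^sup>+z. ennreal (normal_density m2 s z * (h2 z)\<^sup>2) \<partial>lborel)"
proof -
  define K where "K = exp (-9/8) / (sqrt (2 * pi) * s)"
  define I where "I = {(m1 + m2) / 2 - s .. (m1 + m2) / 2 + s}"
  have "K \<ge> 0" unfolding K_def using \<open>s > 0\<close> by simp
  have density_bound: "K \<le> normal_density m s z" if "\<bar>z - m\<bar> \<le> 3/2 * s" for m z
  proof -
    have exponent: "- (3/2 * s)\<^sup>2 / (2 * s\<^sup>2) = -9/8"
      using \<open>s > 0\<close> by (simp add: power2_eq_square)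
    show ?thesis
      using normal_density_lower_bound[OF \<open>s > 0\<close> that] unfolding K_def exponent .
  qed
  have pointwise: "ennreal (K * (d\<^sup>2 / 2)) * indicator I z
      \<le> ennreal (normal_density m1 s z * (h1 z)\<^sup>2) + ennreal (normal_density m2 s z * (h2 z)\<^sup>2)" for z
  proof (cases "z \<in> I")
    case True
    then have "\<bar>z - m1\<bar> \<le> 3/2 * s" "\<bar>z - m2\<bar> \<le> 3/2 * s"
      using assms(4) unfolding I_def abs_le_iff by (auto simp: field_simps)
    then have "K \<le> normal_density m1 s z" "K \<le> normal_density m2 s z"
      by (simp_all add: density_bound)
    have "0 \<le> (h1 z + h2 z)\<^sup>2"
      by simp
    then have "d\<^sup>2 / 2 \<le> (h1 z)\<^sup>2 + (h2 z)\<^sup>2"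
      unfolding assms(5)[of z, symmetric] by (simp add: power2_eq_square algebra_simps)
    then have "K * (d\<^sup>2 / 2) \<le> K * ((h1 z)\<^sup>2 + (h2 z)\<^sup>2)"
      using \<open>K \<ge> 0\<close> by (rule mult_left_mono)
    also have "\<dots> \<le> normal_density m1 s z * (h1 z)\<^sup>2 + normal_density m2 s z * (h2 z)\<^sup>2"
      unfolding distrib_left
      using \<open>K \<le> normal_density m1 s z\<close> \<open>K \<le> normal_density m2 s z\<close>
      by (intro add_mono mult_right_mono) simp_all
    finally show ?thesis
      using True by (simp add: ennreal_plus[symmetric] del: ennreal_plus)
  qed simp
  have "ennreal (exp (-9/8) / sqrt (2 * pi) * d\<^sup>2) = ennreal (K * (d\<^sup>2 / 2)) * emeasure lborel I"
    unfolding K_def I_def using \<open>s > 0\<close> by (simp add: ennreal_mult[symmetric])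
  also have "\<dots> = (\<integral>\<^sup>+z. ennreal (K * (d\<^sup>2 / 2)) * indicator I z \<partial>lborel)"
    by (rule nn_integral_cmult_indicator[symmetric]) (simp add: I_def)
  also have "\<dots> \<le> (\<integral>\<^sup>+z. ennreal (normal_density m1 s z * (h1 z)\<^sup>2)
      + ennreal (normal_density m2 s z * (h2 z)\<^sup>2) \<partial>lborel)"
    by (intro nn_integral_mono pointwise)
  also have "\<dots> = (\<integral>\<^sup>+z. ennreal (normal_density m1 s z * (h1 z)\<^sup>2) \<partial>lborel)
      + (\<integral>\<^sup>+z. ennreal (normal_density m2 s z * (h2 z)\<^sup>2) \<partial>lborel)"
    by (rule nn_integral_add) auto
  finally show ?thesis .
qed

lemma excess_risk_pair_lower_bound:
  fixes t :: "'x \<times> real \<Rightarrow> real" and m1 m2 :: "'x \<Rightarrow> real"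
  assumes [measurable]: "(\<lambda>z. t (x, z)) \<in> borel_measurable borel"
    and "\<sigma> > 0" and "A \<ge> 0" and "\<bar>m1 x - m2 x\<bar> \<le> sqrt (\<sigma>\<^sup>2 + A)"
  shows "ereal (exp (-9/8) / sqrt (2 * pi) * (\<sigma>\<^sup>2 / (\<sigma>\<^sup>2 + A) * (m1 x - m2 x))\<^sup>2)
    \<le> excess_risk t m1 A \<sigma> x + excess_risk t m2 A \<sigma> x"
proof -
  let ?s = "sqrt (\<sigma>\<^sup>2 + A)" and ?d = "\<sigma>\<^sup>2 / (\<sigma>\<^sup>2 + A) * (m2 x - m1 x)"
  have "?s > 0"
    using assms(2,3) by (simp add: add_pos_nonneg)
  have "ennreal (exp (-9/8) / sqrt (2 * pi) * ?d\<^sup>2)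
      \<le> (\<integral>\<^sup>+z. ennreal (normal_density (m1 x) ?s z * (t (x, z) - tstar m1 A \<sigma> (x, z))\<^sup>2) \<partial>lborel)
        + (\<integral>\<^sup>+z. ennreal (normal_density (m2 x) ?s z * (t (x, z) - tstar m2 A \<sigma> (x, z))\<^sup>2) \<partial>lborel)"
    using assms(4) \<open>?s > 0\<close>
    by (intro two_point_gaussian_lower_bound) (auto simp: tstar_def algebra_simps diff_divide_distrib)
  moreover have "?d\<^sup>2 = (\<sigma>\<^sup>2 / (\<sigma>\<^sup>2 + A) * (m1 x - m2 x))\<^sup>2"
    by (simp only: power_mult_distrib power2_commute[of "m2 x"])
  ultimately show ?thesis
    unfolding excess_risk_eq[OF assms(1-3)]
    by (simp add: less_eq_ennreal.rep_eq plus_ennreal.rep_eq)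
qed

theorem lemma2:
  "\<exists>c::real. c > 0 \<and> (\<exists>\<Delta>::real. \<Delta> > 0 \<and>
     (\<forall>(A::real) (\<sigma>::real) (m1::'x \<Rightarrow> real) (m2::'x \<Rightarrow> real) (x::'x) (t::'x \<times> real \<Rightarrow> real).
        A \<ge> 0 \<longrightarrow> \<sigma> > 0 \<longrightarrow>
        \<bar>m1 x - m2 x\<bar> / sqrt (\<sigma>\<^sup>2 + A) \<le> \<Delta> \<longrightarrow>
        (\<lambda>z. t (x, z)) \<in> borel_measurable borel \<longrightarrow>
        ereal (1/2) * (excess_risk t m1 A \<sigma> x + excess_risk t m2 A \<sigma> x)
          \<ge> ereal (c * \<sigma>^4 / (\<sigma>\<^sup>2 + A)\<^sup>2 * (m1 x - m2 x)\<^sup>2)))"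
proof (intro exI conjI allI impI)
  show "exp (-9/8) / (2 * sqrt (2 * pi)) > (0::real)" and "(1::real) > 0"
    by simp_all
  fix A \<sigma> :: real and m1 m2 :: "'x \<Rightarrow> real" and x :: 'x and t :: "'x \<times> real \<Rightarrow> real"
  assume "A \<ge> 0" and "\<sigma> > 0" and "\<bar>m1 x - m2 x\<bar> / sqrt (\<sigma>\<^sup>2 + A) \<le> 1"
    and "(\<lambda>z. t (x, z)) \<in> borel_measurable borel"
  moreover have "sqrt (\<sigma>\<^sup>2 + A) > 0"
    using \<open>\<sigma> > 0\<close> \<open>A \<ge> 0\<close> by (simp add: add_pos_nonneg)
  ultimately have "ereal (exp (-9/8) / sqrt (2 * pi) * (\<sigma>\<^sup>2 / (\<sigma>\<^sup>2 + A) * (m1 x - m2 x))\<^sup>2)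
      \<le> excess_risk t m1 A \<sigma> x + excess_risk t m2 A \<sigma> x"
    by (intro excess_risk_pair_lower_bound) (simp_all add: divide_le_eq)
  then have "ereal (1/2) * ereal (exp (-9/8) / sqrt (2 * pi) * (\<sigma>\<^sup>2 / (\<sigma>\<^sup>2 + A) * (m1 x - m2 x))\<^sup>2)
      \<le> ereal (1/2) * (excess_risk t m1 A \<sigma> x + excess_risk t m2 A \<sigma> x)"
    by (rule ereal_mult_left_mono) simp
  moreover have "1/2 * (exp (-9/8) / sqrt (2 * pi) * (\<sigma>\<^sup>2 / (\<sigma>\<^sup>2 + A) * (m1 x - m2 x))\<^sup>2)
      = exp (-9/8) / (2 * sqrt (2 * pi)) * \<sigma>^4 / (\<sigma>\<^sup>2 + A)\<^sup>2 * (m1 x - m2 x)\<^sup>2"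
    by (simp add: power_mult_distrib power_divide)
  ultimately show "ereal (exp (-9/8) / (2 * sqrt (2 * pi)) * \<sigma>^4 / (\<sigma>\<^sup>2 + A)\<^sup>2 * (m1 x - m2 x)\<^sup>2)
      \<le> ereal (1/2) * (excess_risk t m1 A \<sigma> x + excess_risk t m2 A \<sigma> x)"
    by simp
qed

end
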